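(* Assume $CA_2$. Then ccc is not productive: there are partial orders $\mathbb P$ and $\mathbb Q$, each satisfying the countable chain condition, such that $\mathbb P\times\mathbb Q$ does not satisfy the countable chain condition.
   Context: A type is a sequence $\tau=\{(m_k,n_{k+1},r_{k+1})\}_{k\in\omega}$ of natural numbers with $m_0=1$; $n_k\ge2$ for $k\ge1$; every $r\in\omega$ equals $r_k$ for infinitely many $k$; $m_k>r_{k+1}$; and $m_{k+1}=r_{k+1}+(m_k-r_{k+1})n_{k+1}$ for all $k$. For a set of ordinals $X$ and $\mathcal F\subseteq[X]^{<\omega}$, $\mathcal F_k$ is the set of elements of rank $k$ in $(\mathcal F,\subsetneq)$; $A\sqsubseteq B$ means $A\subseteq B$ and every element of $B$ below an element of $A$ is in $A$; $A<B$ means every element of $A$ is below every element of $B$. $\mathcal F$ is a construction scheme over $X$ of type $\tau$ if (1) every finite subset of $X$ lies in a member of $\mathcal F$; (2) $|F|=m_k$ for $F\in\mathcal F_k$; (3) $E\cap F\sqsubseteq E,F$ for $E,F\in\mathcal F_k$; (4) each $F\in\mathcal F_{k+1}$ is the union of uniquely determined $F_0,\dots,F_{n_{k+1}-1}\in\mathcal F_k$ forming a $\Delta$-system with root $R(F)$, $|R(F)|=r_{k+1}$, $R(F)<F_0\setminus R(F)<\dots<F_{n_{k+1}-1}\setminus R(F)$. For a construction scheme $\mathcal F$ over $\omega_1$, $l\ge1$, $F\in\mathcal F_l$ and finite $\mathcal C\subseteq[\omega_1]^{<\omega}$: $F$ captures $\mathcal C$ if $|\mathcal C|\le n_l$ and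 $\mathcal C$ can be enumerated as $\{c_i\}_{i<|\mathcal C|}$ with $c_i\subseteq F_i$, $c_i\setminus R(F)\neq\emptyset$ and $\phi_i[c_0]=c_i$ where $\phi_i:F_0\to F_i$ is the increasing bijection. $\mathcal F$ is $n$-capturing if for every uncountable $S\subseteq[\omega_1]^{<\omega}$ and every $k\in\omega$ there are $\mathcal C\in[S]^n$, $l>k$ and $F\in\mathcal F_l$ capturing $\mathcal C$. $CA_n$ is the statement: for every type $\tau$ with $n\le n_k$ for all $k\ge1$ there is an $n$-capturing construction scheme over $\omega_1$ of type $\tau$. *)

theory Defs
  imports Main "HOL-Library.Countable_Set"
begin

text \<open>A well-ordered type is omega_1-like if it is uncountable and every proper
initial segment is countable; such a type is order-isomorphic to omega_1.\<close>
definition omega1_type :: "'a::wellorder itself \<Rightarrow> bool" where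
  "omega1_type _ \<longleftrightarrow> uncountable (UNIV::'a set) \<and> (\<forall>x::'a. countable {y. y < x})"

text \<open>The type tau = ((m k, n (k+1), r (k+1)))_k is given by three sequences;
the values n 0 and r 0 are irrelevant.\<close>
definition is_type :: "(nat \<Rightarrow> nat) \<Rightarrow> (nat \<Rightarrow> nat) \<Rightarrow> (nat \<Rightarrow> nat) \<Rightarrow> bool" where
  "is_type m n r \<longleftrightarrow>
     m 0 = 1 \<and>
     (\<forall>k\<ge>1. 2 \<le> n k) \<and>
     (\<forall>x. infinite {k. 1 \<le> k \<and> r k = x}) \<and>
     (\<forall>k. r (Suc k) < m k) \<and>
     (\<forall>k. m (Suc k) = r (Suc k) + (m k - r (Suc k)) * n (Suc k))"

definition initial_in :: "'a::linorder set \<Rightarrow> 'a set \<Rightarrow> bool" where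
  "initial_in A B \<longleftrightarrow> A \<subseteq> B \<and> (\<forall>b\<in>B. \<forall>a\<in>A. b < a \<longrightarrow> b \<in> A)"

definition set_less :: "'a::linorder set \<Rightarrow> 'a set \<Rightarrow> bool" where
  "set_less A B \<longleftrightarrow> (\<forall>a\<in>A. \<forall>b\<in>B. a < b)"

definition scheme_rank :: "'a set set \<Rightarrow> 'a set \<Rightarrow> nat" where
  "scheme_rank \<F> x = Max {length c | c. c \<noteq> [] \<and> sorted_wrt (\<lambda>a b. a \<subset> b) c \<and> set c \<subseteq> \<F> \<and> last c = x} - 1"

definition level :: "'a set set \<Rightarrow> nat \<Rightarrow> 'a set set" where
  "level \<F> k = {x \<in> \<F>. scheme_rank \<F> x = k}"

definition root_of :: "'a set list \<Rightarrow> 'a set" where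
  "root_of Fs = Fs ! 0 \<inter> Fs ! 1"

text \<open>Fs = [F_0,...,F_{n(k+1)-1}] is a decomposition of F (of rank k+1) into
elements of rank k forming an increasing Delta-system with root R(F) of size r(k+1).\<close>
definition decomp :: "(nat \<Rightarrow> nat) \<Rightarrow> (nat \<Rightarrow> nat) \<Rightarrow> 'a::linorder set set \<Rightarrow> nat \<Rightarrow> 'a set \<Rightarrow> 'a set list \<Rightarrow> bool" where
  "decomp n r \<F> k F Fs \<longleftrightarrow>
     length Fs = n (Suc k) \<and>
     set Fs \<subseteq> level \<F> k \<and>
     \<Union>(set Fs) = F \<and>
     (\<forall>i j. i < j \<and> j < length Fs \<longrightarrow> Fs ! i \<inter> Fs ! j = root_of Fs) \<and>
     card (root_of Fs) = r (Suc k) \<and>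
     set_less (root_of Fs) (Fs ! 0 - root_of Fs) \<and>
     (\<forall>i. Suc i < length Fs \<longrightarrow> set_less (Fs ! i - root_of Fs) (Fs ! Suc i - root_of Fs))"

definition construction_scheme ::
  "'a::linorder set \<Rightarrow> (nat \<Rightarrow> nat) \<Rightarrow> (nat \<Rightarrow> nat) \<Rightarrow> (nat \<Rightarrow> nat) \<Rightarrow> 'a set set \<Rightarrow> bool" where
  "construction_scheme X m n r \<F> \<longleftrightarrow>
     \<F> \<subseteq> {A. A \<subseteq> X \<and> finite A} \<and>
     (\<forall>A. A \<subseteq> X \<and> finite A \<longrightarrow> (\<exists>F\<in>\<F>. A \<subseteq> F)) \<and>
     (\<forall>k. \<forall>F\<in>level \<F> k. card F = m k) \<and>
     (\<forall>k. \<forall>E\<in>level \<F> k. \<forall>F\<in>level \<F> k. initial_in (E \<inter> F) E \<and> initial_in (E \<inter> F) F) \<and>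
     (\<forall>k. \<forall>F\<in>level \<F> (Suc k). \<exists>!Fs. decomp n r \<F> k F Fs)"

definition pieces :: "(nat \<Rightarrow> nat) \<Rightarrow> (nat \<Rightarrow> nat) \<Rightarrow> 'a::linorder set set \<Rightarrow> nat \<Rightarrow> 'a set \<Rightarrow> 'a set list" where
  "pieces n r \<F> l F = (THE Fs. decomp n r \<F> (l - 1) F Fs)"

definition captures ::
  "(nat \<Rightarrow> nat) \<Rightarrow> (nat \<Rightarrow> nat) \<Rightarrow> 'a::linorder set set \<Rightarrow> nat \<Rightarrow> 'a set \<Rightarrow> 'a set set \<Rightarrow> bool" where
  "captures n r \<F> l F C \<longleftrightarrow>
     (let Fs = pieces n r \<F> l F; R = root_of Fs in
       1 \<le> l \<and> F \<in> level \<F> l \<and> finite C \<and> card C \<le> n l \<and>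
       (\<exists>c. bij_betw c {..<card C} C \<and>
          (\<forall>i<card C. c i \<subseteq> Fs ! i \<and> c i - R \<noteq> {} \<and>
             (\<exists>\<phi>. bij_betw \<phi> (Fs ! 0) (Fs ! i) \<and> strict_mono_on (Fs ! 0) \<phi> \<and> \<phi> ` (c 0) = c i))))"

definition capturing :: "nat \<Rightarrow> (nat \<Rightarrow> nat) \<Rightarrow> (nat \<Rightarrow> nat) \<Rightarrow> 'a::linorder set set \<Rightarrow> bool" where
  "capturing N n r \<F> \<longleftrightarrow>
     (\<forall>S. S \<subseteq> {A. finite A} \<and> uncountable S \<longrightarrow>
        (\<forall>k. \<exists>C l F. C \<subseteq> S \<and> finite C \<and> card C = N \<and> k < l \<and> F \<in> level \<F> l \<and> captures n r \<F> l F C))"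

definition CA :: "nat \<Rightarrow> 'a::wellorder itself \<Rightarrow> bool" where
  "CA N _ \<longleftrightarrow>
     (\<forall>m n r. is_type m n r \<and> (\<forall>k\<ge>1. N \<le> n k) \<longrightarrow>
        (\<exists>\<F>::'a set set. construction_scheme UNIV m n r \<F> \<and> capturing N n r \<F>))"

definition is_poset :: "'b set \<Rightarrow> ('b \<Rightarrow> 'b \<Rightarrow> bool) \<Rightarrow> bool" where
  "is_poset P le \<longleftrightarrow> (\<forall>p\<in>P. le p p) \<and>
     (\<forall>p\<in>P. \<forall>q\<in>P. le p q \<and> le q p \<longrightarrow> p = q) \<and>
     (\<forall>p\<in>P. \<forall>q\<in>P. \<forall>s\<in>P. le p q \<and> le q s \<longrightarrow> le p s)"

definition compatible :: "'b set \<Rightarrow> ('b \<Rightarrow> 'b \<Rightarrow> bool) \<Rightarrow> 'b \<Rightarrow> 'b \<Rightarrow> bool" where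
  "compatible P le p q \<longleftrightarrow> (\<exists>s\<in>P. le s p \<and> le s q)"

definition antichain :: "'b set \<Rightarrow> ('b \<Rightarrow> 'b \<Rightarrow> bool) \<Rightarrow> 'b set \<Rightarrow> bool" where
  "antichain P le A \<longleftrightarrow> A \<subseteq> P \<and> (\<forall>p\<in>A. \<forall>q\<in>A. p \<noteq> q \<longrightarrow> \<not> compatible P le p q)"

definition ccc :: "'b set \<Rightarrow> ('b \<Rightarrow> 'b \<Rightarrow> bool) \<Rightarrow> bool" where
  "ccc P le \<longleftrightarrow> (\<forall>A. antichain P le A \<longrightarrow> countable A)"

definition prod_le :: "('b \<Rightarrow> 'b \<Rightarrow> bool) \<Rightarrow> ('c \<Rightarrow> 'c \<Rightarrow> bool) \<Rightarrow> 'b \<times> 'c \<Rightarrow> 'b \<times> 'c \<Rightarrow> bool" where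
  "prod_le le1 le2 x y \<longleftrightarrow> le1 (fst x) (fst y) \<and> le2 (snd x) (snd y)"

end

theory Submission
  imports Defs "HOL-Library.Disjoint_Sets"
begin

(*
  Work with the type in which every element of the scheme splits into two pieces.  If F
  separates x < y, i.e. x lies in its left piece P and y in its right piece Q, both outside
  the root, colour the pair by whether y lies to the right of the copy of x in Q.  The colour
  does not depend on F: all separating elements have the same rank, and the levels are
  coherent.  For each colour b the finite b-homogeneous sets, ordered by reverse inclusion,
  form a poset, and the pairs ({x}, {x}) form an uncountable antichain in the product of the
  two posets, since no pair of points has both colours.

  Each poset is ccc.  An uncountable antichain yields, by the Delta-system lemma, an
  uncountable disjoint family of kernels u over a common root.  Group the kernels into
  disjoint pairs u < g u and capture two such pairs by some F.  The order isomorphism between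
  the pieces of F carries one pair onto the other, so u0 and g u1 (colour True), or g u0 and
  u1 (colour False), span a homogeneous common extension of two members of the antichain.
*)

section \<open>A type with two pieces at every level\<close>

text \<open>\<open>binary_root (k + 1)\<close> is the first coordinate of the \<open>k\<close>-th pair enumerated by
  \<open>prod_decode\<close>, so every value recurs infinitely often, as a type requires.\<close>
definition binary_root :: "nat \<Rightarrow> nat" where
  "binary_root k = fst (prod_decode (k - 1))"

primrec binary_size :: "nat \<Rightarrow> nat" where
  "binary_size 0 = 1"
| "binary_size (Suc k) = binary_root (Suc k) + (binary_size k - binary_root (Suc k)) * 2"

lemma binary_root_Suc_le: "binary_root (Suc k) \<le> k"
proof -
  have "binary_root (Suc k) \<le> prod_encode (prod_decode k)"
    by (metis binary_root_def diff_Suc_1 le_prod_encode_1 prod.collapse)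
  then show ?thesis by simp
qed

lemma binary_root_less_size: "binary_root (Suc k) < binary_size k"
proof -
  have "Suc k \<le> binary_size k"
  proof (induction k)
    case (Suc k)
    then show ?case using binary_root_Suc_le[of k] by simp
  qed simp
  then show ?thesis using binary_root_Suc_le[of k] by simp
qed

lemma infinite_binary_root_fibre: "infinite {k. 1 \<le> k \<and> binary_root k = x}"
proof -
  have "range (\<lambda>b. Suc (prod_encode (x, b))) \<subseteq> {k. 1 \<le> k \<and> binary_root k = x}"
    by (auto simp: binary_root_def)
  moreover have "infinite (range (\<lambda>b. Suc (prod_encode (x, b))))"
    by (rule range_inj_infinite) (auto simp: inj_def)
  ultimately show ?thesis using infinite_super by blast
qed

lemma is_type_binary: "is_type binary_size (\<lambda>_. 2) binary_root"
  unfolding is_type_def using binary_root_less_size infinite_binary_root_fibre by auto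

definition pos :: "'a::linorder \<Rightarrow> 'a set \<Rightarrow> nat" where
  "pos x A = card {y\<in>A. y < x}"

lemma pos_strict_mono: "finite A \<Longrightarrow> x \<in> A \<Longrightarrow> y \<in> A \<Longrightarrow> x < y \<Longrightarrow> pos x A < pos y A"
  unfolding pos_def by (rule psubset_card_mono) auto

lemma pos_inj: "finite A \<Longrightarrow> x \<in> A \<Longrightarrow> y \<in> A \<Longrightarrow> pos x A = pos y A \<Longrightarrow> x = y"
  by (metis linorder_neqE nat_neq_iff pos_strict_mono)

lemma pos_image:
  assumes "strict_mono_on A f" "bij_betw f A B" "x \<in> A"
  shows "pos (f x) B = pos x A"
proof -
  have "{z\<in>B. z < f x} = f ` {y\<in>A. y < x}"
    using assms by (auto simp: bij_betw_def strict_mono_on_less)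
  moreover have "inj_on f {y\<in>A. y < x}"
    using assms(2) by (auto simp: bij_betw_def intro: inj_on_subset)
  ultimately show ?thesis unfolding pos_def by (simp add: card_image)
qed

lemma pos_less_card_iff:
  assumes "finite u" "finite v" "set_less u v" "x \<in> u \<union> v"
  shows "pos x (u \<union> v) < card u \<longleftrightarrow> x \<in> u"
proof
  show "x \<in> u \<Longrightarrow> pos x (u \<union> v) < card u"
    using assms unfolding pos_def set_less_def by (intro psubset_card_mono) (auto dest: less_asym)
  show "x \<in> u" if "pos x (u \<union> v) < card u"
  proof (rule ccontr)
    assume "x \<notin> u"
    then have "u \<subseteq> {y\<in>u \<union> v. y < x}"
      using assms by (auto simp: set_less_def)
    then have "card u \<le> pos x (u \<union> v)"
      unfolding pos_def using assms by (intro card_mono) auto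
    then show False using that by simp
  qed
qed

lemma strict_mono_on_image_blocks:
  fixes f :: "'a::linorder \<Rightarrow> 'b::linorder"
  assumes "finite u0" "finite v0" "finite u1" "finite v1"
    and "set_less u0 v0" "set_less u1 v1" "card u0 = card u1"
    and mono: "strict_mono_on (u0 \<union> v0) f" and image: "f ` (u0 \<union> v0) = u1 \<union> v1"
  shows "f ` u0 = u1" "f ` v0 = v1"
proof -
  have bij: "bij_betw f (u0 \<union> v0) (u1 \<union> v1)"
    using strict_mono_on_imp_inj_on[OF mono] image by (simp add: bij_betw_def)
  have block: "x \<in> u0 \<longleftrightarrow> f x \<in> u1" if x: "x \<in> u0 \<union> v0" for x
  proof -
    have fx: "f x \<in> u1 \<union> v1"
      using image x by blast
    have "x \<in> u0 \<longleftrightarrow> pos x (u0 \<union> v0) < card u0"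
      using pos_less_card_iff[OF assms(1,2,5) x] by simp
    also have "\<dots> \<longleftrightarrow> pos (f x) (u1 \<union> v1) < card u1"
      using pos_image[OF mono bij x] assms(7) by simp
    also have "\<dots> \<longleftrightarrow> f x \<in> u1"
      using pos_less_card_iff[OF assms(3,4,6) fx] .
    finally show ?thesis .
  qed
  have disj: "u0 \<inter> v0 = {}" "u1 \<inter> v1 = {}"
    using assms(5,6) by (auto simp: set_less_def)
  have sub0: "f ` u0 \<subseteq> u1"
    using block by blast
  have sub1: "f ` v0 \<subseteq> v1"
  proof
    fix y assume "y \<in> f ` v0"
    then obtain x where x: "x \<in> v0" "y = f x" by blast
    moreover have "f x \<notin> u1"
      using block[of x] x disj by blast
    moreover have "f x \<in> u1 \<union> v1"
      using image x by blast
    ultimately show "y \<in> v1" by simp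
  qed
  have cover: "f ` u0 \<union> f ` v0 = u1 \<union> v1"
    using image by (simp add: image_Un)
  have "A = U \<and> B = V"
    if "A \<subseteq> U" "B \<subseteq> V" "A \<union> B = U \<union> V" "U \<inter> V = {}" for A B U V :: "'b set"
    using that by blast
  from this[OF sub0 sub1 cover disj(2)] show "f ` u0 = u1" "f ` v0 = v1"
    by simp_all
qed

text \<open>The shape of the two pieces of an element of a construction scheme:
  \<open>P \<inter> Q < P - Q < Q - P\<close>.\<close>
definition increasing_delta_pair :: "'a::linorder set \<Rightarrow> 'a set \<Rightarrow> bool" where
  "increasing_delta_pair P Q \<longleftrightarrow>
     set_less (P \<inter> Q) (P - Q) \<and> set_less (P \<inter> Q) (Q - P) \<and> set_less (P - Q) (Q - P)"

lemma pos_union_left: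
  assumes "increasing_delta_pair P Q" "x \<in> P"
  shows "pos x (P \<union> Q) = pos x P"
proof -
  have "x < y" if "y \<in> Q - P" for y
    using assms that unfolding increasing_delta_pair_def set_less_def by blast
  then have "{y\<in>P \<union> Q. y < x} = {y\<in>P. y < x}"
    by (auto dest: less_asym)
  then show ?thesis unfolding pos_def by simp
qed

lemma pos_union_right:
  assumes "finite P" "finite Q" "increasing_delta_pair P Q" "y \<in> Q - P"
  shows "pos y (P \<union> Q) = card (P - Q) + pos y Q"
proof -
  have "{z\<in>P \<union> Q. z < y} = (P - Q) \<union> {z\<in>Q. z < y}"
    using assms(3,4) unfolding increasing_delta_pair_def set_less_def by auto
  moreover have "(P - Q) \<inter> {z\<in>Q. z < y} = {}"
    by blast
  ultimately show ?thesis
    using assms(1,2) unfolding pos_def by (simp add: card_Un_disjoint)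
qed

lemma pos_inter:
  assumes "increasing_delta_pair P Q" "x \<in> P \<inter> Q"
  shows "pos x P = pos x Q"
proof -
  have "x < y" if "y \<in> (P - Q) \<union> (Q - P)" for y
    using assms that unfolding increasing_delta_pair_def set_less_def by blast
  then have "{y\<in>P. y < x} = {y\<in>Q. y < x}"
    using assms(2) by (auto dest: less_asym)
  then show ?thesis unfolding pos_def by simp
qed

lemma increasing_delta_pair_iso_fixes_inter:
  assumes "finite Q" "increasing_delta_pair P Q"
    and "bij_betw \<phi> P Q" "strict_mono_on P \<phi>" "x \<in> P \<inter> Q"
  shows "\<phi> x = x"
proof (rule pos_inj[OF assms(1)])
  show "\<phi> x \<in> Q" "x \<in> Q"
    using assms(3,5) by (auto simp: bij_betw_def)
  have "pos (\<phi> x) Q = pos x P"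
    using pos_image[OF assms(4,3)] assms(5) by simp
  also have "\<dots> = pos x Q"
    using pos_inter[OF assms(2,5)] .
  finally show "pos (\<phi> x) Q = pos x Q" .
qed

lemma increasing_delta_pair_iso_shift:
  assumes fin: "finite P" "finite Q" and delta: "increasing_delta_pair P Q"
    and \<phi>: "bij_betw \<phi> P Q" "strict_mono_on P \<phi>" and \<beta>: "\<beta> \<in> P - Q"
  shows "\<phi> \<beta> \<in> Q - P" "pos (\<phi> \<beta>) (P \<union> Q) = pos \<beta> (P \<union> Q) + card (P - Q)"
proof -
  have "\<phi> \<beta> \<in> Q"
    using \<phi>(1) \<beta> by (auto simp: bij_betw_def)
  moreover have "\<phi> \<beta> \<notin> P"
  proof
    assume "\<phi> \<beta> \<in> P"
    then have "\<phi> (\<phi> \<beta>) = \<phi> \<beta>"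
      using increasing_delta_pair_iso_fixes_inter[OF fin(2) delta \<phi>] \<open>\<phi> \<beta> \<in> Q\<close> by blast
    then have "\<phi> \<beta> = \<beta>"
      using \<phi>(1) \<beta> \<open>\<phi> \<beta> \<in> P\<close> by (auto simp: bij_betw_def inj_on_def)
    then show False
      using \<beta> \<open>\<phi> \<beta> \<in> Q\<close> by simp
  qed
  ultimately show \<phi>\<beta>: "\<phi> \<beta> \<in> Q - P" by blast
  have "pos (\<phi> \<beta>) (P \<union> Q) = card (P - Q) + pos (\<phi> \<beta>) Q"
    using pos_union_right[OF fin delta \<phi>\<beta>] .
  also have "pos (\<phi> \<beta>) Q = pos \<beta> P"
    using pos_image[OF \<phi>(2,1)] \<beta> by simp
  also have "\<dots> = pos \<beta> (P \<union> Q)"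
    using pos_union_left[OF delta] \<beta> by simp
  finally show "pos (\<phi> \<beta>) (P \<union> Q) = pos \<beta> (P \<union> Q) + card (P - Q)"
    by simp
qed

section \<open>Uncountable families of finite sets\<close>

lemma countable_meeting:
  assumes "\<And>z. countable {t\<in>T. z \<in> t}" "countable Z"
  shows "countable {t\<in>T. t \<inter> Z \<noteq> {}}"
proof -
  have "{t\<in>T. t \<inter> Z \<noteq> {}} = (\<Union>z\<in>Z. {t\<in>T. z \<in> t})" by auto
  then show ?thesis using assms by simp
qed

lemma disjoint_countable_containing:
  assumes "disjoint T"
  shows "countable {t\<in>T. z \<in> t}"
proof (cases "\<exists>t\<in>T. z \<in> t")
  case True
  then obtain t where "t \<in> T" "z \<in> t" by blast
  then have "{t\<in>T. z \<in> t} \<subseteq> {t}"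
    using assms by (auto simp: disjoint_def)
  then show ?thesis by (rule countable_subset) simp
next
  case False
  then have "{t\<in>T. z \<in> t} = {}" by blast
  then show ?thesis by (metis countable_empty)
qed

lemma uncountable_if_image_superset:
  assumes "B \<subseteq> f ` A" "uncountable B"
  shows "uncountable A"
proof
  assume "countable A"
  then have "countable (f ` A)" by simp
  then show False using countable_subset[OF assms(1)] assms(2) by blast
qed

lemma uncountable_disjoint_subfamily:
  assumes "uncountable T" "\<forall>t\<in>T. finite t" "\<And>z. countable {t\<in>T. z \<in> t}"
  obtains S where "S \<subseteq> T" "uncountable S" "disjoint S"
proof -
  let ?D = "{M. M \<subseteq> T \<and> disjoint M}"
  have "\<forall>C\<in>chains ?D. \<Union>C \<in> ?D"
    by (auto simp: chains_def intro: pairwise_chain_Union)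
  from Zorn_Lemma[OF this] obtain M where "M \<in> ?D" and max: "\<forall>X\<in>?D. M \<subseteq> X \<longrightarrow> X = M" ..
  then have M: "M \<subseteq> T" "disjoint M" by auto
  have "uncountable M"
  proof
    assume "countable M"
    moreover have "countable m" if "m \<in> M" for m
      using that M(1) assms(2) by (auto intro: countable_finite)
    ultimately have "countable (\<Union>m\<in>M. m)"
      by (rule countable_UN)
    then have "countable ({t\<in>T. t \<inter> \<Union>M \<noteq> {}} \<union> M)"
      using countable_meeting[OF assms(3)] \<open>countable M\<close> by simp
    then have "\<not> T \<subseteq> {t\<in>T. t \<inter> \<Union>M \<noteq> {}} \<union> M"
      using assms(1) countable_subset[of T] by blast
    then obtain t where t: "t \<in> T" "t \<inter> \<Union>M = {}" "t \<notin> M"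
      by blast
    then have "insert t M \<in> ?D"
      using M by (auto simp: pairwise_insert disjnt_def)
    then show False
      using max t(3) by blast
  qed
  then show ?thesis using M that by blast
qed

lemma remove_common_point:
  assumes "\<forall>a\<in>A. finite a \<and> card a = Suc k" "uncountable {a\<in>A. z \<in> a}"
  shows "uncountable ((\<lambda>a. a - {z}) ` {a\<in>A. z \<in> a})"
    and "\<forall>b\<in>(\<lambda>a. a - {z}) ` {a\<in>A. z \<in> a}. finite b \<and> card b = k"
proof -
  let ?Az = "{a\<in>A. z \<in> a}"
  have "?Az \<subseteq> insert z ` ((\<lambda>a. a - {z}) ` ?Az)"
  proof
    fix a assume a: "a \<in> ?Az"
    then have "a = insert z (a - {z})" by auto
    then show "a \<in> insert z ` ((\<lambda>a. a - {z}) ` ?Az)"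
      using a by (intro image_eqI[of _ "insert z" "a - {z}"]) auto
  qed
  then show "uncountable ((\<lambda>a. a - {z}) ` ?Az)"
    using assms(2) by (rule uncountable_if_image_superset)
  show "\<forall>b\<in>(\<lambda>a. a - {z}) ` ?Az. finite b \<and> card b = k"
  proof
    fix b assume "b \<in> (\<lambda>a. a - {z}) ` ?Az"
    then obtain a where "a \<in> A" "z \<in> a" "b = a - {z}" by blast
    then show "finite b \<and> card b = k" using assms(1) by simp
  qed
qed

lemma delta_system_reinsert:
  fixes A :: "'a set set"
  assumes B: "B \<subseteq> (\<lambda>a. a - {z}) ` {a\<in>A. z \<in> a}" "uncountable B"
    and root: "pairwise (\<lambda>a b. a \<inter> b = D) B"
  shows "\<exists>A'. A' \<subseteq> A \<and> uncountable A' \<and> pairwise (\<lambda>a b. a \<inter> b = insert z D) A'"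
proof -
  let ?A' = "{a\<in>A. z \<in> a \<and> a - {z} \<in> B}"
  have "B \<subseteq> (\<lambda>a. a - {z}) ` ?A'"
  proof
    fix b assume "b \<in> B"
    then obtain a where "a \<in> A" "z \<in> a" "b = a - {z}"
      using B(1) by blast
    then show "b \<in> (\<lambda>a. a - {z}) ` ?A'"
      using \<open>b \<in> B\<close> by (intro image_eqI[of _ _ a]) auto
  qed
  then have "uncountable ?A'"
    using B(2) by (rule uncountable_if_image_superset)
  moreover have "pairwise (\<lambda>a b. a \<inter> b = insert z D) ?A'"
  proof (rule pairwiseI)
    fix a b assume ab: "a \<in> ?A'" "b \<in> ?A'" "a \<noteq> b"
    have neq: "a - {z} \<noteq> b - {z}"
    proof
      assume "a - {z} = b - {z}"
      then have "insert z (a - {z}) = insert z (b - {z})" by simp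
      then show False using ab by (simp add: insert_absorb)
    qed
    have mem: "a - {z} \<in> B" "b - {z} \<in> B" and "z \<in> a" "z \<in> b"
      using ab(1,2) by simp_all
    have "(a - {z}) \<inter> (b - {z}) = D"
      using pairwiseD[OF root mem neq] .
    moreover have "a \<inter> b = insert z ((a - {z}) \<inter> (b - {z}))"
      using \<open>z \<in> a\<close> \<open>z \<in> b\<close> by auto
    ultimately show "a \<inter> b = insert z D" by simp
  qed
  moreover have "?A' \<subseteq> A" by blast
  ultimately show ?thesis by blast
qed

text \<open>The \<Delta>-system lemma, by induction on the common size of the sets: either some
  point lies in uncountably many of them, and it can be removed and put back into
  the root, or the family has an uncountable pairwise disjoint subfamily.\<close>
lemma uncountable_delta_system:
  fixes A :: "'a set set"
  assumes "\<forall>a\<in>A. finite a \<and> card a = k" "uncountable A"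
  shows "\<exists>D A'. A' \<subseteq> A \<and> uncountable A' \<and> pairwise (\<lambda>a b. a \<inter> b = D) A'"
  using assms
proof (induction k arbitrary: A)
  case 0
  then have "A \<subseteq> {{}}" by auto
  then have "countable A" by (rule countable_subset) simp
  then show ?case using "0.prems"(2) by contradiction
next
  case (Suc k)
  show ?case
  proof (cases "\<exists>z. uncountable {a\<in>A. z \<in> a}")
    case True
    then obtain z where z: "uncountable {a\<in>A. z \<in> a}" by blast
    let ?Az = "{a\<in>A. z \<in> a}"
    note unc = remove_common_point(1)[OF Suc.prems(1) z]
      and card = remove_common_point(2)[OF Suc.prems(1) z]
    obtain D B where B: "B \<subseteq> (\<lambda>a. a - {z}) ` ?Az" "uncountable B"
      and root: "pairwise (\<lambda>a b. a \<inter> b = D) B"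
      using Suc.IH[OF card unc] by blast
    from delta_system_reinsert[OF B root] show ?thesis by blast
  next
    case False
    then have "countable {a\<in>A. z \<in> a}" for z
      by blast
    moreover have "\<forall>a\<in>A. finite a"
      using Suc.prems(1) by blast
    ultimately obtain S where S: "S \<subseteq> A" "uncountable S" "disjoint S"
      using uncountable_disjoint_subfamily[OF Suc.prems(2)] by metis
    show ?thesis
    proof (intro exI[of _ "{} :: 'a set"] exI[of _ S] conjI)
      show "pairwise (\<lambda>a b. a \<inter> b = {}) S"
        using S(3) by (simp add: pairwise_def disjnt_def)
    qed (fact S)+
  qed
qed

lemma uncountable_fibre:
  fixes f :: "'a \<Rightarrow> nat"
  assumes "uncountable A"
  obtains k where "uncountable {a\<in>A. f a = k}"
proof -
  have "\<exists>k. uncountable {a\<in>A. f a = k}"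
  proof (rule ccontr)
    assume "\<nexists>k. uncountable {a\<in>A. f a = k}"
    then have "countable (\<Union>k. {a\<in>A. f a = k})"
      by (intro countable_UN) auto
    moreover have "(\<Union>k. {a\<in>A. f a = k}) = A" by auto
    ultimately show False using assms by simp
  qed
  then show ?thesis using that by blast
qed

lemma delta_system_root_subset:
  assumes "uncountable A" "pairwise (\<lambda>a b. a \<inter> b = D) A" "a \<in> A"
  shows "D \<subseteq> a"
proof -
  have "\<not> A \<subseteq> {a}"
    using assms(1) countable_subset[of A "{a}"] by auto
  then obtain b where "b \<in> A" "b \<noteq> a" by blast
  then have "a \<inter> b = D"
    using pairwiseD[OF assms(2), of a b] assms(3) by simp
  then show ?thesis by blast
qed

lemma delta_system_kernels:
  assumes unc: "uncountable A" and root: "pairwise (\<lambda>a b. a \<inter> b = D) A"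
    and card: "\<forall>a\<in>A. finite a \<and> card a = k"
  defines "T \<equiv> (\<lambda>a. a - D) ` (A - {D})"
  shows "uncountable T" "disjoint T"
    "\<forall>u\<in>T. u \<noteq> {} \<and> finite u \<and> card u = k - card D \<and> u \<inter> D = {} \<and> u \<union> D \<in> A"
proof -
  have unc': "uncountable (A - {D})"
    using uncountable_minus_countable[OF unc, of "{D}"] by simp
  have D_sub: "D \<subseteq> a" if "a \<in> A - {D}" for a
    using delta_system_root_subset[OF unc' pairwise_subset[OF root Diff_subset] that] .
  have "A - {D} \<subseteq> (\<lambda>u. u \<union> D) ` T"
  proof
    fix a assume a: "a \<in> A - {D}"
    then have "a = (a - D) \<union> D"
      using D_sub by blast
    moreover have "a - D \<in> T"
      unfolding T_def using a by (rule imageI)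
    ultimately show "a \<in> (\<lambda>u. u \<union> D) ` T"
      by (rule image_eqI[where f = "\<lambda>u. u \<union> D"])
  qed
  then show "uncountable T"
    using unc' by (rule uncountable_if_image_superset)
  show "disjoint T"
    unfolding disjoint_def
  proof (intro ballI impI)
    fix u u' assume "u \<in> T" "u' \<in> T" "u \<noteq> u'"
    then obtain a a' where "a \<in> A - {D}" "a' \<in> A - {D}" "u = a - D" "u' = a' - D" "a \<noteq> a'"
      unfolding T_def by blast
    moreover from this have "a \<inter> a' = D"
      using pairwiseD[OF root, of a a'] by simp
    ultimately show "u \<inter> u' = {}"
      by blast
  qed
  show "\<forall>u\<in>T. u \<noteq> {} \<and> finite u \<and> card u = k - card D \<and> u \<inter> D = {} \<and> u \<union> D \<in> A"
  proof
    fix u assume "u \<in> T"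
    then obtain a where a: "a \<in> A - {D}" "u = a - D"
      unfolding T_def by blast
    then have "D \<subseteq> a" "a \<in> A" "card a = k" "finite a" "a \<noteq> D"
      using D_sub card by auto
    then show "u \<noteq> {} \<and> finite u \<and> card u = k - card D \<and> u \<inter> D = {} \<and> u \<union> D \<in> A"
      using a(2) by (auto simp: card_Diff_subset finite_subset Un_absorb2)
  qed
qed

lemma uncountable_family_kernels:
  assumes "uncountable A" "\<forall>a\<in>A. finite a"
  obtains D T n where "uncountable T" "disjoint T"
    "\<forall>u\<in>T. u \<noteq> {} \<and> finite u \<and> card u = n \<and> u \<inter> D = {} \<and> u \<union> D \<in> A"
proof -
  obtain k where k: "uncountable {a\<in>A. card a = k}"
    by (rule uncountable_fibre[OF assms(1)])
  have card: "\<forall>a\<in>{a\<in>A. card a = k}. finite a \<and> card a = k"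
    using assms(2) by blast
  from uncountable_delta_system[OF this k] obtain D A'
    where A': "A' \<subseteq> {a\<in>A. card a = k}" "uncountable A'"
      and root: "pairwise (\<lambda>a b. a \<inter> b = D) A'"
    by blast
  have "\<forall>a\<in>A'. finite a \<and> card a = k"
    using A'(1) card by blast
  note kernels = delta_system_kernels[OF A'(2) root this]
  have "\<forall>u\<in>(\<lambda>a. a - D) ` (A' - {D}).
      u \<noteq> {} \<and> finite u \<and> card u = k - card D \<and> u \<inter> D = {} \<and> u \<union> D \<in> A"
    using kernels(3) A'(1) by blast
  with kernels(1,2) show ?thesis by (rule that)
qed

lemma exists_above_in_disjoint_family:
  fixes T :: "'a::linorder set set"
  assumes "\<forall>x::'a. countable {y. y < x}" "uncountable T" "disjoint T" "finite u"
  shows "\<exists>v\<in>T. set_less u v"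
proof -
  let ?Z = "\<Union>w\<in>u. insert w {z. z < w}"
  have "countable ?Z"
    using assms(1) by (intro countable_UN countable_finite[OF assms(4)]) simp
  then have "countable {t\<in>T. t \<inter> ?Z \<noteq> {}}"
    by (rule countable_meeting[OF disjoint_countable_containing[OF assms(3)]])
  then have "\<not> T \<subseteq> {t\<in>T. t \<inter> ?Z \<noteq> {}}"
    using assms(2) countable_subset[of T] by blast
  then obtain v where v: "v \<in> T" "v \<inter> ?Z = {}" by blast
  have "set_less u v"
    unfolding set_less_def
  proof (intro ballI)
    fix w x assume "w \<in> u" "x \<in> v"
    then have "x \<noteq> w" "\<not> x < w"
      using v(2) by auto
    then show "w < x" by simp
  qed
  then show ?thesis using v(1) by blast
qed

lemma inj_on_union_above:
  assumes "disjoint T" "\<forall>u\<in>T. u \<noteq> {}" "\<forall>u\<in>T. set_less u (g u)"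
  shows "inj_on (\<lambda>u. u \<union> g u) T"
proof (rule inj_onI, rule ccontr)
  fix u u' assume u: "u \<in> T" "u' \<in> T" "u \<union> g u = u' \<union> g u'" "u \<noteq> u'"
  have "u \<inter> u' = {}"
    using disjointD[OF assms(1) u(1,2,4)] .
  moreover have "u \<noteq> {}" "u' \<noteq> {}"
    using assms(2) u(1,2) by auto
  then obtain x x' where "x \<in> u" "x' \<in> u'"
    by blast
  moreover have "x \<in> u' \<union> g u'" "x' \<in> u \<union> g u"
    using u(3) \<open>x \<in> u\<close> \<open>x' \<in> u'\<close> by (metis Un_iff)+
  ultimately have "x \<in> g u'" "x' \<in> g u"
    by blast+
  have "x < x'"
    using assms(3) u(1) \<open>x \<in> u\<close> \<open>x' \<in> g u\<close> by (auto simp: set_less_def)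
  moreover have "x' < x"
    using assms(3) u(2) \<open>x' \<in> u'\<close> \<open>x \<in> g u'\<close> by (auto simp: set_less_def)
  ultimately show False by simp
qed

lemma countable_containing_union_above:
  fixes T :: "'a::linorder set set"
  assumes om: "\<forall>x::'a. countable {y. y < x}"
    and "disjoint T" "\<forall>u\<in>T. u \<noteq> {}" "\<forall>u\<in>T. set_less u (g u)"
  shows "countable {t\<in>(\<lambda>u. u \<union> g u) ` T. z \<in> t}"
proof -
  let ?near = "{t\<in>T. t \<inter> insert z {y. y < z} \<noteq> {}}"
  have "{t\<in>(\<lambda>u. u \<union> g u) ` T. z \<in> t} \<subseteq> (\<lambda>u. u \<union> g u) ` ?near"
  proof
    fix t assume "t \<in> {t\<in>(\<lambda>u. u \<union> g u) ` T. z \<in> t}"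
    then obtain u where u: "u \<in> T" "t = u \<union> g u" "z \<in> u \<union> g u" by blast
    have "u \<in> ?near"
    proof (cases "z \<in> u")
      case True
      then show ?thesis using u(1) by blast
    next
      case False
      then have "z \<in> g u"
        using u(3) by blast
      obtain w where "w \<in> u"
        using assms(3) u(1) by blast
      then have "w < z"
        using assms(4) u(1) \<open>z \<in> g u\<close> by (auto simp: set_less_def)
      then show ?thesis
        using u(1) \<open>w \<in> u\<close> by blast
    qed
    then show "t \<in> (\<lambda>u. u \<union> g u) ` ?near"
      using u(2) by blast
  qed
  moreover have "countable ?near"
    using om by (intro countable_meeting[OF disjoint_countable_containing[OF assms(2)]]) simp
  ultimately show ?thesis
    by (rule countable_subset[OF _ countable_image])
qed

lemma uncountable_disjoint_pairs:
  fixes T :: "'a::linorder set set"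
  assumes om: "\<forall>x::'a. countable {y. y < x}"
    and T: "uncountable T" "disjoint T" "\<forall>u\<in>T. u \<noteq> {} \<and> finite u"
  obtains g S where "\<forall>u\<in>T. g u \<in> T \<and> set_less u (g u)"
    "S \<subseteq> (\<lambda>u. u \<union> g u) ` T" "uncountable S" "disjoint S"
proof -
  define g where "g u = (SOME v. v \<in> T \<and> set_less u v)" for u
  have g: "\<forall>u\<in>T. g u \<in> T \<and> set_less u (g u)"
  proof
    fix u assume "u \<in> T"
    then have "\<exists>v. v \<in> T \<and> set_less u v"
      using exists_above_in_disjoint_family[OF om T(1,2)] T(3) by blast
    then show "g u \<in> T \<and> set_less u (g u)"
      unfolding g_def by (rule someI_ex)
  qed
  have ne: "\<forall>u\<in>T. u \<noteq> {}" and above: "\<forall>u\<in>T. set_less u (g u)"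
    using T(3) g by blast+
  have "uncountable ((\<lambda>u. u \<union> g u) ` T)"
    using T(1) countable_image_inj_on inj_on_union_above[OF T(2) ne above] by blast
  moreover have "\<forall>t\<in>(\<lambda>u. u \<union> g u) ` T. finite t"
    using T(3) g by auto
  ultimately obtain S where "S \<subseteq> (\<lambda>u. u \<union> g u) ` T" "uncountable S" "disjoint S"
    using uncountable_disjoint_subfamily countable_containing_union_above[OF om T(2) ne above]
    by metis
  with g show ?thesis by (rule that)
qed

section \<open>Construction schemes with two pieces at every level\<close>

text \<open>For \<open>x \<in> P - Q\<close>, \<open>pos x F + card (P - Q)\<close> is the position in \<open>F = P \<union> Q\<close> of the
  copy of \<open>x\<close> in \<open>Q\<close>; the colour of \<open>(x, y)\<close> records whether \<open>y\<close> lies to the right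
  of that copy.\<close>
definition coloured :: "'a::linorder set set \<Rightarrow> bool \<Rightarrow> 'a \<Rightarrow> 'a \<Rightarrow> bool" where
  "coloured \<F> b x y \<longleftrightarrow> (\<exists>k F. F \<in> level \<F> (Suc k) \<and>
     (let P = pieces (\<lambda>_. 2) binary_root \<F> (Suc k) F ! 0;
          Q = pieces (\<lambda>_. 2) binary_root \<F> (Suc k) F ! 1
      in x \<in> P - Q \<and> y \<in> Q - P \<and> (b \<longleftrightarrow> pos x F + card (P - Q) < pos y F)))"

definition homogeneous :: "'a::linorder set set \<Rightarrow> bool \<Rightarrow> 'a set set" where
  "homogeneous \<F> b = {p. finite p \<and> (\<forall>\<alpha>\<in>p. \<forall>\<gamma>\<in>p. \<alpha> < \<gamma> \<longrightarrow> coloured \<F> b \<alpha> \<gamma>)}"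

lemma is_poset_homogeneous: "is_poset (homogeneous \<F> b) (\<lambda>p q. q \<subseteq> p)"
  unfolding is_poset_def by auto

lemma union_homogeneous:
  assumes p: "a \<union> D \<in> homogeneous \<F> b" and q: "a' \<union> D \<in> homogeneous \<F> b"
    and "set_less a a'" and cross: "\<forall>\<alpha>\<in>a. \<forall>\<gamma>\<in>a'. coloured \<F> b \<alpha> \<gamma>"
  shows "a \<union> a' \<union> D \<in> homogeneous \<F> b"
proof -
  have "coloured \<F> b \<alpha> \<gamma>"
    if mem: "\<alpha> \<in> a \<union> a' \<union> D" "\<gamma> \<in> a \<union> a' \<union> D" and less: "\<alpha> < \<gamma>" for \<alpha> \<gamma>
  proof -
    consider "\<alpha> \<in> a \<union> D" "\<gamma> \<in> a \<union> D" | "\<alpha> \<in> a' \<union> D" "\<gamma> \<in> a' \<union> D"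
      | "\<alpha> \<in> a" "\<gamma> \<in> a'" | "\<alpha> \<in> a'" "\<gamma> \<in> a"
      using mem by blast
    then show ?thesis
    proof cases
      case 1
      then show ?thesis using p less by (simp add: homogeneous_def)
    next
      case 2
      then show ?thesis using q less by (simp add: homogeneous_def)
    next
      case 3
      then show ?thesis using cross by simp
    next
      case 4
      then have "\<gamma> < \<alpha>" using assms(3) by (simp add: set_less_def)
      then show ?thesis using less by simp
    qed
  qed
  moreover have "finite (a \<union> a' \<union> D)"
    using p q by (simp add: homogeneous_def)
  ultimately show ?thesis
    unfolding homogeneous_def by blast
qed

locale binary_scheme =
  fixes \<F> :: "'a::linorder set set"
  assumes scheme: "construction_scheme UNIV binary_size (\<lambda>_. 2) binary_root \<F>"
begin

abbreviation piece :: "nat \<Rightarrow> 'a set \<Rightarrow> nat \<Rightarrow> 'a set" where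
  "piece k F i \<equiv> pieces (\<lambda>_. 2) binary_root \<F> (Suc k) F ! i"

lemma level_finite: "F \<in> level \<F> k \<Longrightarrow> finite F"
  using scheme by (auto simp: construction_scheme_def level_def)

lemma level_card: "F \<in> level \<F> k \<Longrightarrow> card F = binary_size k"
  using scheme by (auto simp: construction_scheme_def)

lemma level_inter_initial:
  "E \<in> level \<F> k \<Longrightarrow> F \<in> level \<F> k \<Longrightarrow> initial_in (E \<inter> F) E \<and> initial_in (E \<inter> F) F"
  using scheme by (auto simp: construction_scheme_def)

lemma decomp_pieces:
  assumes "F \<in> level \<F> (Suc k)"
  shows "decomp (\<lambda>_. 2) binary_root \<F> k F (pieces (\<lambda>_. 2) binary_root \<F> (Suc k) F)"
proof -
  have "\<exists>!Fs. decomp (\<lambda>_. 2) binary_root \<F> k F Fs"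
    using scheme assms by (auto simp: construction_scheme_def)
  then show ?thesis unfolding pieces_def by (simp add: theI')
qed

lemma
  assumes "F \<in> level \<F> (Suc k)"
  shows pieces_level: "piece k F 0 \<in> level \<F> k" "piece k F 1 \<in> level \<F> k"
    and pieces_union: "piece k F 0 \<union> piece k F 1 = F"
    and card_pieces_inter: "card (piece k F 0 \<inter> piece k F 1) = binary_root (Suc k)"
    and pieces_inter_less: "set_less (piece k F 0 \<inter> piece k F 1) (piece k F 0 - piece k F 1)"
    and pieces_diff_less: "set_less (piece k F 0 - piece k F 1) (piece k F 1 - piece k F 0)"
proof -
  let ?Fs = "pieces (\<lambda>_. 2) binary_root \<F> (Suc k) F"
  have len: "length ?Fs = 2" and sub: "set ?Fs \<subseteq> level \<F> k" and un: "\<Union>(set ?Fs) = F"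
    and card: "card (root_of ?Fs) = binary_root (Suc k)"
    and less0: "set_less (root_of ?Fs) (?Fs ! 0 - root_of ?Fs)"
    and less: "\<forall>i. Suc i < length ?Fs \<longrightarrow> set_less (?Fs ! i - root_of ?Fs) (?Fs ! Suc i - root_of ?Fs)"
    using decomp_pieces[OF assms] unfolding decomp_def by simp_all
  have set: "set ?Fs = {piece k F 0, piece k F 1}"
    using len by (auto simp: numeral_2_eq_2 length_Suc_conv)
  have diff: "piece k F 0 - root_of ?Fs = piece k F 0 - piece k F 1"
    "piece k F 1 - root_of ?Fs = piece k F 1 - piece k F 0"
    by (auto simp: root_of_def)
  show "piece k F 0 \<in> level \<F> k" "piece k F 1 \<in> level \<F> k"
    using sub set by auto
  show "piece k F 0 \<union> piece k F 1 = F"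
    using un set by simp
  show "card (piece k F 0 \<inter> piece k F 1) = binary_root (Suc k)"
    using card by (simp add: root_of_def)
  show "set_less (piece k F 0 \<inter> piece k F 1) (piece k F 0 - piece k F 1)"
    using less0 diff(1) by (simp add: root_of_def)
  show "set_less (piece k F 0 - piece k F 1) (piece k F 1 - piece k F 0)"
    using less[rule_format, of 0] len diff by simp
qed

lemma card_pieces_diff:
  assumes "F \<in> level \<F> (Suc k)"
  shows "card (piece k F 0 - piece k F 1) = binary_size k - binary_root (Suc k)"
proof -
  have "card (piece k F 0 - piece k F 1) = card (piece k F 0 - piece k F 0 \<inter> piece k F 1)"
    by (simp add: Diff_Int)
  also have "\<dots> = card (piece k F 0) - card (piece k F 0 \<inter> piece k F 1)"
    using level_finite[OF pieces_level(1)[OF assms]] by (simp add: card_Diff_subset)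
  finally show ?thesis
    using level_card[OF pieces_level(1)[OF assms]] card_pieces_inter[OF assms] by simp
qed

lemma increasing_delta_pair_pieces:
  assumes "F \<in> level \<F> (Suc k)"
  shows "increasing_delta_pair (piece k F 0) (piece k F 1)"
proof -
  have "card (piece k F 0 - piece k F 1) \<noteq> 0"
    using card_pieces_diff[OF assms] binary_root_less_size[of k] by simp
  then obtain z where "z \<in> piece k F 0 - piece k F 1"
    by (metis card.empty ex_in_conv)
  then have "set_less (piece k F 0 \<inter> piece k F 1) (piece k F 1 - piece k F 0)"
    using pieces_inter_less[OF assms] pieces_diff_less[OF assms]
    unfolding set_less_def by (meson less_trans)
  then show ?thesis
    using pieces_inter_less[OF assms] pieces_diff_less[OF assms]
    unfolding increasing_delta_pair_def by blast
qed

lemma pieces_finite: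
  assumes "F \<in> level \<F> (Suc k)"
  shows "finite (piece k F 0)" "finite (piece k F 1)"
  using level_finite pieces_level[OF assms] by blast+

lemma level_subset_containing:
  assumes "F \<in> level \<F> j" "k \<le> j" "x \<in> F"
  shows "\<exists>H\<in>level \<F> k. H \<subseteq> F \<and> x \<in> H"
  using assms
proof (induction j arbitrary: F)
  case (Suc j)
  show ?case
  proof (cases "k = Suc j")
    case True
    then show ?thesis using Suc.prems by blast
  next
    case False
    then have "k \<le> j" using Suc.prems(2) by simp
    obtain P where P: "P \<in> level \<F> j" "P \<subseteq> F" "x \<in> P"
    proof (cases "x \<in> piece j F 0")
      case True
      then show ?thesis
        using that[of "piece j F 0"] pieces_level(1)[OF Suc.prems(1)] pieces_union[OF Suc.prems(1)]
        by blast
    next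
      case False
      then have "x \<in> piece j F 1"
        using Suc.prems(3) pieces_union[OF Suc.prems(1)] by blast
      then show ?thesis
        using that[of "piece j F 1"] pieces_level(2)[OF Suc.prems(1)] pieces_union[OF Suc.prems(1)]
        by blast
    qed
    obtain H where "H \<in> level \<F> k" "H \<subseteq> P" "x \<in> H"
      using Suc.IH[OF P(1) \<open>k \<le> j\<close> P(3)] by blast
    then show ?thesis using P(2) by blast
  qed
qed auto

lemma separated_not_in_lower_level:
  assumes F: "F \<in> level \<F> (Suc k)"
    and x: "x \<in> piece k F 0 - piece k F 1" and y: "y \<in> piece k F 1 - piece k F 0"
    and E: "E \<in> level \<F> j" "j \<le> k"
  shows "\<not> (x \<in> E \<and> y \<in> E)"
proof
  assume xy: "x \<in> E \<and> y \<in> E"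
  obtain H where H: "H \<in> level \<F> j" "H \<subseteq> piece k F 1" "y \<in> H"
    using level_subset_containing[OF pieces_level(2)[OF F] E(2)] y by blast
  have "x < y"
    using pieces_diff_less[OF F] x y by (auto simp: set_less_def)
  then have "x \<in> H"
    using level_inter_initial[OF E(1) H(1)] xy H(3) by (auto simp: initial_in_def)
  then show False
    using H(2) x by blast
qed

lemma pos_eq_same_level:
  assumes "E \<in> level \<F> k" "F \<in> level \<F> k" "x \<in> E" "x \<in> F"
  shows "pos x E = pos x F"
proof -
  have "{y\<in>E. y < x} = {y\<in>F. y < x}"
    using level_inter_initial[OF assms(1,2)] assms(3,4) unfolding initial_in_def by blast
  then show ?thesis unfolding pos_def by simp
qed

lemma coloured_unique:
  assumes "coloured \<F> b x y" "coloured \<F> b' x y"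
  shows "b = b'"
proof -
  obtain k F where F: "F \<in> level \<F> (Suc k)"
    "x \<in> piece k F 0 - piece k F 1" "y \<in> piece k F 1 - piece k F 0"
    and b: "b \<longleftrightarrow> pos x F + card (piece k F 0 - piece k F 1) < pos y F"
    using assms(1) unfolding coloured_def Let_def by blast
  obtain k' G where G: "G \<in> level \<F> (Suc k')"
    "x \<in> piece k' G 0 - piece k' G 1" "y \<in> piece k' G 1 - piece k' G 0"
    and b': "b' \<longleftrightarrow> pos x G + card (piece k' G 0 - piece k' G 1) < pos y G"
    using assms(2) unfolding coloured_def Let_def by blast
  have xy: "x \<in> F" "y \<in> F" "x \<in> G" "y \<in> G"
    using F(2,3) G(2,3) pieces_union[OF F(1)] pieces_union[OF G(1)] by blast+
  have "\<not> k < k'"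
    using separated_not_in_lower_level[OF G(1-3) F(1)] xy by auto
  moreover have "\<not> k' < k"
    using separated_not_in_lower_level[OF F(1-3) G(1)] xy by auto
  ultimately have "k = k'" by simp
  then show ?thesis
    using b b' card_pieces_diff[OF F(1)] card_pieces_diff[OF G(1)]
      pos_eq_same_level[OF F(1), of G] G(1) xy by simp
qed

lemma piece_iso_coloured:
  assumes F: "F \<in> level \<F> (Suc k)"
    and \<phi>: "bij_betw \<phi> (piece k F 0) (piece k F 1)" "strict_mono_on (piece k F 0) \<phi>"
    and \<alpha>: "\<alpha> \<in> piece k F 0 - piece k F 1" and \<beta>: "\<beta> \<in> piece k F 0 - piece k F 1"
    and "\<alpha> \<noteq> \<beta>"
  shows "coloured \<F> (\<alpha> < \<beta>) \<alpha> (\<phi> \<beta>)"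
proof -
  note delta = increasing_delta_pair_pieces[OF F]
  have "\<alpha> \<in> F" "\<beta> \<in> F"
    using \<alpha> \<beta> pieces_union[OF F] by blast+
  then have "\<alpha> < \<beta> \<longleftrightarrow> pos \<alpha> F < pos \<beta> F"
    using \<open>\<alpha> \<noteq> \<beta>\<close> pos_strict_mono[OF level_finite[OF F], of \<alpha> \<beta>]
      pos_strict_mono[OF level_finite[OF F], of \<beta> \<alpha>]
    by (cases \<alpha> \<beta> rule: linorder_cases) auto
  moreover have "pos (\<phi> \<beta>) F = pos \<beta> F + card (piece k F 0 - piece k F 1)"
    using increasing_delta_pair_iso_shift(2)[OF pieces_finite[OF F] delta \<phi> \<beta>]
    unfolding pieces_union[OF F] .
  ultimately have "\<alpha> < \<beta> \<longleftrightarrow> pos \<alpha> F + card (piece k F 0 - piece k F 1) < pos (\<phi> \<beta>) F"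
    by simp
  moreover have "\<phi> \<beta> \<in> piece k F 1 - piece k F 0"
    using increasing_delta_pair_iso_shift(1)[OF pieces_finite[OF F] delta \<phi> \<beta>] .
  ultimately show ?thesis
    unfolding coloured_def Let_def using F \<alpha> by blast
qed

lemma piece_iso_coloured_blocks:
  assumes F: "F \<in> level \<F> (Suc k)"
    and \<phi>: "bij_betw \<phi> (piece k F 0) (piece k F 1)" "strict_mono_on (piece k F 0) \<phi>"
    and sub: "u \<union> v \<subseteq> piece k F 0 - piece k F 1" and less: "set_less u v"
  shows "\<forall>\<alpha>\<in>u. \<forall>\<gamma>\<in>\<phi> ` v. coloured \<F> True \<alpha> \<gamma>"
    and "\<forall>\<alpha>\<in>v. \<forall>\<gamma>\<in>\<phi> ` u. coloured \<F> False \<alpha> \<gamma>"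
proof -
  have order: "\<alpha> < \<beta>" if "\<alpha> \<in> u" "\<beta> \<in> v" for \<alpha> \<beta>
    using less that by (simp add: set_less_def)
  have right: "coloured \<F> True \<alpha> (\<phi> \<beta>)" if "\<alpha> \<in> u" "\<beta> \<in> v" for \<alpha> \<beta>
    using piece_iso_coloured[OF F \<phi>, of \<alpha> \<beta>] order[OF that] sub that by auto
  have left: "coloured \<F> False \<beta> (\<phi> \<alpha>)" if "\<alpha> \<in> u" "\<beta> \<in> v" for \<alpha> \<beta>
  proof -
    have "\<not> \<beta> < \<alpha>"
      using order[OF that] by simp
    moreover have "coloured \<F> (\<beta> < \<alpha>) \<beta> (\<phi> \<alpha>)"
      using piece_iso_coloured[OF F \<phi>, of \<beta> \<alpha>] order[OF that] sub that by auto
    ultimately show ?thesis by simp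
  qed
  show "\<forall>\<alpha>\<in>u. \<forall>\<gamma>\<in>\<phi> ` v. coloured \<F> True \<alpha> \<gamma>"
    using right by blast
  show "\<forall>\<alpha>\<in>v. \<forall>\<gamma>\<in>\<phi> ` u. coloured \<F> False \<alpha> \<gamma>"
    using left by blast
qed

lemma captures_two_pieces:
  assumes "captures (\<lambda>_. 2) binary_root \<F> (Suc k) F C" "card C = 2"
  obtains c0 c1 \<phi> where "c0 \<in> C" "c1 \<in> C" "c0 \<noteq> c1" "c0 \<subseteq> piece k F 0" "c1 \<subseteq> piece k F 1"
    "bij_betw \<phi> (piece k F 0) (piece k F 1)" "strict_mono_on (piece k F 0) \<phi>" "\<phi> ` c0 = c1"
proof -
  obtain c where c: "bij_betw c {..<2::nat} C"
    and ci: "\<forall>i<2. c i \<subseteq> piece k F i \<and> c i - root_of (pieces (\<lambda>_. 2) binary_root \<F> (Suc k) F) \<noteq> {} \<and>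
      (\<exists>\<phi>. bij_betw \<phi> (piece k F 0) (piece k F i) \<and> strict_mono_on (piece k F 0) \<phi> \<and> \<phi> ` c 0 = c i)"
    using assms(1) unfolding captures_def Let_def assms(2) by blast
  have "(0::nat) < 2" "(1::nat) < 2" by simp_all
  note c0 = ci[rule_format, OF this(1)] and c1 = ci[rule_format, OF this(2)]
  obtain \<phi> where \<phi>: "bij_betw \<phi> (piece k F 0) (piece k F 1)" "strict_mono_on (piece k F 0) \<phi>"
    "\<phi> ` c 0 = c 1"
    using c1 by blast
  have "c 0 \<in> C" "c 1 \<in> C"
    using c by (auto simp: bij_betw_def)
  moreover have "c 0 \<noteq> c 1"
  proof
    assume "c 0 = c 1"
    then have "(0::nat) = 1"
      by (rule inj_onD[OF bij_betw_imp_inj_on[OF c]]) simp_all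
    then show False by simp
  qed
  moreover have "c 0 \<subseteq> piece k F 0" "c 1 \<subseteq> piece k F 1"
    using c0 c1 by blast+
  ultimately show ?thesis
    using that \<phi> by blast
qed

lemma capturing_disjoint_pair:
  assumes "capturing 2 (\<lambda>_. 2) binary_root \<F>"
    and S: "S \<subseteq> {A. finite A}" "uncountable S" "disjoint S"
  obtains k F c0 c1 \<phi> where "F \<in> level \<F> (Suc k)" "c0 \<in> S" "c1 \<in> S"
    "c0 \<subseteq> piece k F 0 - piece k F 1" "c1 \<subseteq> piece k F 1 - piece k F 0"
    "bij_betw \<phi> (piece k F 0) (piece k F 1)" "strict_mono_on (piece k F 0) \<phi>" "\<phi> ` c0 = c1"
proof -
  from assms(1)[unfolded capturing_def, rule_format, OF conjI[OF S(1,2)], of 0]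
  obtain C l F where C: "C \<subseteq> S" "card C = 2" "0 < l" "F \<in> level \<F> l"
    and cap: "captures (\<lambda>_. 2) binary_root \<F> l F C"
    by blast
  obtain k where l: "l = Suc k"
    using C(3) gr0_conv_Suc by blast
  have F: "F \<in> level \<F> (Suc k)"
    using C(4) l by simp
  obtain c0 c1 \<phi> where c: "c0 \<in> C" "c1 \<in> C" "c0 \<noteq> c1" "c0 \<subseteq> piece k F 0" "c1 \<subseteq> piece k F 1"
    and \<phi>: "bij_betw \<phi> (piece k F 0) (piece k F 1)" "strict_mono_on (piece k F 0) \<phi>" "\<phi> ` c0 = c1"
    using captures_two_pieces[OF cap[unfolded l] C(2)] by metis
  note delta = increasing_delta_pair_pieces[OF F]
  have cS: "c0 \<in> S" "c1 \<in> S"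
    using c(1,2) C(1) by blast+
  have c01: "c0 \<inter> c1 = {}"
    using disjointD[OF S(3) cS c(3)] .
  have "x \<notin> piece k F 1" if "x \<in> c0" for x
  proof
    assume "x \<in> piece k F 1"
    then have "\<phi> x = x"
      using increasing_delta_pair_iso_fixes_inter[OF pieces_finite(2)[OF F] delta \<phi>(1,2)] that c(4)
      by blast
    then have "x \<in> c1"
      using \<phi>(3) that by (metis image_eqI)
    then show False
      using c01 that by blast
  qed
  then have c0: "c0 \<subseteq> piece k F 0 - piece k F 1"
    using c(4) by blast
  have "c1 \<subseteq> piece k F 1 - piece k F 0"
  proof
    fix y assume "y \<in> c1"
    then obtain \<beta> where "\<beta> \<in> c0" "y = \<phi> \<beta>"
      using \<phi>(3) by blast
    then show "y \<in> piece k F 1 - piece k F 0"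
      using increasing_delta_pair_iso_shift(1)[OF pieces_finite[OF F] delta \<phi>(1,2)] c0 by blast
  qed
  then show ?thesis
    using that[OF F cS c0 _ \<phi>] by blast
qed

text \<open>Capturing two pairs \<open>u \<union> g u\<close> with \<open>u < g u\<close>, rather than two single sets, is what
  lets the order of points inside one captured set decide the colour of the pairs
  crossing to the other.\<close>
lemma exists_coloured_pair_in_family:
  assumes cap: "capturing 2 (\<lambda>_. 2) binary_root \<F>" and om: "\<forall>x::'a. countable {y. y < x}"
    and T: "uncountable T" "disjoint T" "\<forall>u\<in>T. u \<noteq> {} \<and> finite u \<and> card u = n"
  obtains a a' where "a \<in> T" "a' \<in> T" "a \<noteq> a'" "set_less a a'"
    "\<forall>\<alpha>\<in>a. \<forall>\<gamma>\<in>a'. coloured \<F> b \<alpha> \<gamma>"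
proof -
  have ne_fin: "\<forall>u\<in>T. u \<noteq> {} \<and> finite u"
    using T(3) by blast
  then obtain g S where g: "\<forall>u\<in>T. g u \<in> T \<and> set_less u (g u)"
    and S: "S \<subseteq> (\<lambda>u. u \<union> g u) ` T" "uncountable S" "disjoint S"
    using uncountable_disjoint_pairs[OF om T(1,2)] by metis
  have "S \<subseteq> {A. finite A}"
  proof
    fix s assume "s \<in> S"
    then obtain u where u: "u \<in> T" "s = u \<union> g u"
      using S(1) by blast
    then have "finite u" "finite (g u)"
      using ne_fin g by blast+
    then show "s \<in> {A. finite A}"
      using u(2) by simp
  qed
  then obtain k F c0 c1 \<phi> where F: "F \<in> level \<F> (Suc k)" and cS: "c0 \<in> S" "c1 \<in> S"
    and c: "c0 \<subseteq> piece k F 0 - piece k F 1" "c1 \<subseteq> piece k F 1 - piece k F 0"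
    and \<phi>: "bij_betw \<phi> (piece k F 0) (piece k F 1)" "strict_mono_on (piece k F 0) \<phi>" "\<phi> ` c0 = c1"
    by (rule capturing_disjoint_pair[OF cap _ S(2,3)])
  obtain u0 u1 where u: "u0 \<in> T" "u1 \<in> T" "c0 = u0 \<union> g u0" "c1 = u1 \<union> g u1"
    using cS S(1) by blast
  have gu: "g u0 \<in> T" "g u1 \<in> T" "set_less u0 (g u0)" "set_less u1 (g u1)"
    using g u(1,2) by blast+
  have "finite u0" "finite (g u0)" "finite u1" "finite (g u1)" "card u0 = card u1"
    using T(3) u(1,2) gu(1,2) by auto
  moreover have "strict_mono_on (u0 \<union> g u0) \<phi>"
    using \<phi>(2) c(1) u(3) by (auto intro: monotone_on_subset)
  ultimately have blocks: "\<phi> ` u0 = u1" "\<phi> ` g u0 = g u1"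
    using strict_mono_on_image_blocks[OF _ _ _ _ gu(3,4)] \<phi>(3) u(3,4) by blast+
  have across: "a \<noteq> a' \<and> set_less a a'" if "a \<in> T" "a \<subseteq> c0" "a' \<subseteq> c1" for a a'
  proof
    show "set_less a a'"
      using that(2,3) c pieces_diff_less[OF F] unfolding set_less_def by blast
    show "a \<noteq> a'"
      using that c T(3) by blast
  qed
  note coloured = piece_iso_coloured_blocks[OF F \<phi>(1,2) _ gu(3)]
  show ?thesis
  proof (cases b)
    case True
    then show ?thesis
      using that[of u0 "g u1"] across[of u0 "g u1"] coloured(1) blocks(2) u gu(2) c(1) by auto
  next
    case False
    then show ?thesis
      using that[of "g u0" u1] across[of "g u0" u1] coloured(2) blocks(1) u gu(1) c(1) by auto
  qed
qed

lemma ccc_homogeneous: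
  assumes cap: "capturing 2 (\<lambda>_. 2) binary_root \<F>" and om: "\<forall>x::'a. countable {y. y < x}"
  shows "ccc (homogeneous \<F> b) (\<lambda>p q. q \<subseteq> p)"
  unfolding ccc_def
proof (intro allI impI)
  fix A assume anti: "antichain (homogeneous \<F> b) (\<lambda>p q. q \<subseteq> p) A"
  then have A: "A \<subseteq> homogeneous \<F> b" "\<forall>a\<in>A. finite a"
    by (auto simp: antichain_def homogeneous_def)
  show "countable A"
  proof (rule ccontr)
    assume "uncountable A"
    then obtain D T n where T: "uncountable T" "disjoint T"
      "\<forall>u\<in>T. u \<noteq> {} \<and> finite u \<and> card u = n \<and> u \<inter> D = {} \<and> u \<union> D \<in> A"
      using uncountable_family_kernels A(2) by metis
    moreover have "\<forall>u\<in>T. u \<noteq> {} \<and> finite u \<and> card u = n"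
      using T(3) by blast
    ultimately obtain a a' where a: "a \<in> T" "a' \<in> T" "a \<noteq> a'" "set_less a a'"
      "\<forall>\<alpha>\<in>a. \<forall>\<gamma>\<in>a'. coloured \<F> b \<alpha> \<gamma>"
      using exists_coloured_pair_in_family[OF cap om] by metis
    have in_A: "a \<union> D \<in> A" "a' \<union> D \<in> A" "a \<inter> D = {}" "a' \<inter> D = {}"
      using T(3) a(1,2) by blast+
    have "a \<union> D \<in> homogeneous \<F> b" "a' \<union> D \<in> homogeneous \<F> b"
      using in_A(1,2) A(1) by blast+
    then have "a \<union> a' \<union> D \<in> homogeneous \<F> b"
      by (rule union_homogeneous[OF _ _ a(4,5)])
    then have "compatible (homogeneous \<F> b) (\<lambda>p q. q \<subseteq> p) (a \<union> D) (a' \<union> D)"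
      unfolding compatible_def by (intro bexI[of _ "a \<union> a' \<union> D"]) auto
    moreover have "a \<union> D \<noteq> a' \<union> D"
    proof
      assume "a \<union> D = a' \<union> D"
      then have "a = a'"
        using in_A(3,4) by (auto simp: set_eq_iff)
      then show False
        using a(3) by contradiction
    qed
    ultimately show False
      using anti[unfolded antichain_def, THEN conjunct2, rule_format, OF in_A(1,2)] by blast
  qed
qed

lemma not_ccc_homogeneous_product:
  assumes "uncountable (UNIV::'a set)"
  shows "\<not> ccc (homogeneous \<F> False \<times> homogeneous \<F> True) (prod_le (\<lambda>p q. q \<subseteq> p) (\<lambda>p q. q \<subseteq> p))"
proof -
  let ?P = "homogeneous \<F> False \<times> homogeneous \<F> True"
  let ?le = "prod_le (\<lambda>p q. q \<subseteq> p) (\<lambda>p q. q \<subseteq> p)"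
  let ?A = "range (\<lambda>\<alpha>::'a. ({\<alpha>}, {\<alpha>}))"
  have incompatible: "\<not> compatible ?P ?le ({\<alpha>}, {\<alpha>}) ({\<gamma>}, {\<gamma>})" if "\<alpha> < \<gamma>" for \<alpha> \<gamma>
  proof
    assume "compatible ?P ?le ({\<alpha>}, {\<alpha>}) ({\<gamma>}, {\<gamma>})"
    then obtain s t where "s \<in> homogeneous \<F> False" "t \<in> homogeneous \<F> True"
      "\<alpha> \<in> s" "\<gamma> \<in> s" "\<alpha> \<in> t" "\<gamma> \<in> t"
      unfolding compatible_def prod_le_def by auto
    then have "coloured \<F> False \<alpha> \<gamma>" "coloured \<F> True \<alpha> \<gamma>"
      using that unfolding homogeneous_def by blast+
    then show False
      using coloured_unique by blast
  qed
  have "antichain ?P ?le ?A"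
    unfolding antichain_def
  proof (intro conjI ballI impI)
    show "?A \<subseteq> ?P"
      by (auto simp: homogeneous_def)
    fix p q assume "p \<in> ?A" "q \<in> ?A" "p \<noteq> q"
    then obtain \<alpha> \<gamma> where p: "p = ({\<alpha>}, {\<alpha>})" and q: "q = ({\<gamma>}, {\<gamma>})" and "\<alpha> \<noteq> \<gamma>"
      by blast
    then consider "\<alpha> < \<gamma>" | "\<gamma> < \<alpha>"
      by fastforce
    then show "\<not> compatible ?P ?le p q"
    proof cases
      case 1
      then show ?thesis using incompatible p q by blast
    next
      case 2
      then show ?thesis using incompatible p q
        unfolding compatible_def prod_le_def by blast
    qed
  qed
  moreover have "uncountable ?A"
  proof -
    have inj: "inj (\<lambda>\<alpha>::'a. ({\<alpha>}, {\<alpha>}))"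
      by (simp add: inj_def)
    show ?thesis
      using countable_image_inj_eq[OF inj] assms by simp
  qed
  ultimately show ?thesis
    unfolding ccc_def by blast
qed

end

theorem mainTheorem12:
  assumes "omega1_type TYPE('a::wellorder)"
    and "CA 2 TYPE('a)"
  shows "\<exists>(P::'a set set) leP (Q::'a set set) leQ.
           is_poset P leP \<and> is_poset Q leQ \<and> ccc P leP \<and> ccc Q leQ \<and>
           \<not> ccc (P \<times> Q) (prod_le leP leQ)"
proof -
  have "\<forall>k\<ge>1. (2::nat) \<le> (\<lambda>_. 2) k" by simp
  from assms(2)[unfolded CA_def, rule_format, OF conjI[OF is_type_binary this]]
  obtain \<F> :: "'a set set" where "construction_scheme UNIV binary_size (\<lambda>_. 2) binary_root \<F>"
    and cap: "capturing 2 (\<lambda>_. 2) binary_root \<F>"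
    by blast
  then interpret binary_scheme \<F>
    by unfold_locales
  have om: "\<forall>x::'a. countable {y. y < x}" and unc: "uncountable (UNIV::'a set)"
    using assms(1) unfolding omega1_type_def by auto
  show ?thesis
  proof (intro exI conjI)
    show "is_poset (homogeneous \<F> False) (\<lambda>p q. q \<subseteq> p)"
      by (rule is_poset_homogeneous)
    show "is_poset (homogeneous \<F> True) (\<lambda>p q. q \<subseteq> p)"
      by (rule is_poset_homogeneous)
    show "ccc (homogeneous \<F> False) (\<lambda>p q. q \<subseteq> p)"
      by (rule ccc_homogeneous[OF cap om])
    show "ccc (homogeneous \<F> True) (\<lambda>p q. q \<subseteq> p)"
      by (rule ccc_homogeneous[OF cap om])
    show "\<not> ccc (homogeneous \<F> False \<times> homogeneous \<F> True) (prod_le (\<lambda>p q. q \<subseteq> p) (\<lambda>p q. q \<subseteq> p))"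
      by (rule not_ccc_homogeneous_product[OF unc])
  qed
qed

end
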